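(* For every maximal consistent set $X_0$, the canonical epistemic transition system $ETS(X_0)$ is regular, i.e., for every state $w\in W$ and every $\mathbf{s}\in\Phi^{\mathcal{A}}$ there is $w'\in W$ with $(w,\mathbf{s},w')\in M$.
   Context: Fix a set of agents $\mathcal{A}$; a coalition is a subset of $\mathcal{A}$. Language $\Phi$: $\phi ::= p \mid \neg\phi \mid \phi\to\phi \mid \mathsf{K}_C\phi \mid \mathsf{H}_C\phi$ ($C\subseteq\mathcal{A}$). Proof system: propositional tautologies; Truth $\mathsf{K}_C\phi\to\phi$; Negative Introspection $\neg\mathsf{K}_C\phi\to\mathsf{K}_C\neg\mathsf{K}_C\phi$; Distributivity $\mathsf{K}_C(\phi\to\psi)\to(\mathsf{K}_C\phi\to\mathsf{K}_C\psi)$; Monotonicity $\mathsf{K}_C\phi\to\mathsf{K}_D\phi$ ($C\subseteq D$); Strategic Positive Introspection $\mathsf{H}_C\phi\to\mathsf{K}_C\mathsf{H}_C\phi$; Cooperation $\mathsf{H}_C(\phi\to\psi)\to(\mathsf{H}_D\phi\to\mathsf{H}_{C\cup D}\psi)$ ($C\cap D=\varnothing$); Empty Coalition $\mathsf{K}_\varnothing\phi\to\mathsf{H}_\varnothing\phi$; Perfect Recall $\mathsf{H}_D\phi\to\mathsf{H}_D\mathsf{K}_C\phi$ ($D\subseteq C\ne\varnothing$); Unachievability of Falsehood $\neg\mathsf{H}_C\bot$; rules Necessitation ($\phi/\mathsf{K}_C\phi$), Strategic Necessitation ($\phi/\mathsf{H}_C\phi$), Modus Ponens. Consistency and maximal consistency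 are with respect to this system. Canonical system $ETS(X_0)=(W,\{\sim_a\}_{a\in\mathcal{A}},\Phi,M,\pi)$ for a maximal consistent $X_0$: $W$ is the set of all finite sequences $X_0,C_1,X_1,\dots,C_n,X_n$ ($n\ge0$) where each $X_i$ is a maximal consistent set, each $C_i\subseteq\mathcal{A}$, and $\{\phi\mid\mathsf{K}_{C_i}\phi\in X_{i-1}\}\subseteq X_i$ for $i\ge1$. For $w=X_0,C_1,\dots,C_n,X_n$ and $w'=X_0,C'_1,\dots,C'_m,X'_m$, $w\sim_a w'$ iff there is $k\le\min\{n,m\}$ with $X_i=X'_i$ and $C_i=C'_i$ for $0<i\le k$, $a\in C_i$ for $k<i\le n$ and $a\in C'_i$ for $k<i\le m$. The domain of choices is $\Phi$. $hd(w)$ denotes the last set of $w$. $(w,\mathbf{s},w')\in M$ (for $\mathbf{s}\in\Phi^{\mathcal{A}}$) iff for every coalition $D$ and formula $\phi$, if $\mathsf{H}_D\phi\in hd(w)$ and $(\mathbf{s})_a=\phi$ for all $a\in D$, then $\phi\in hd(w')$. $\pi(p)=\{w\in W\mid p\in hd(w)\}$. *)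

theory Defs
  imports Main
begin

datatype ('p, 'a) fm =
    Atom 'p
  | Neg "('p, 'a) fm"
  | Imp "('p, 'a) fm" "('p, 'a) fm"
  | Kn "'a set" "('p, 'a) fm"
  | Hw "'a set" "('p, 'a) fm"

definition FBot :: "('p, 'a) fm" where
  "FBot = Neg (Imp (Atom undefined) (Atom undefined))"

text \<open>Propositional evaluation: modal formulas (and atoms) are treated as propositional atoms.\<close>
fun peval :: "(('p, 'a) fm \<Rightarrow> bool) \<Rightarrow> ('p, 'a) fm \<Rightarrow> bool" where
  "peval v (Atom p) = v (Atom p)"
| "peval v (Neg f) = (\<not> peval v f)"
| "peval v (Imp f g) = (peval v f \<longrightarrow> peval v g)"
| "peval v (Kn C f) = v (Kn C f)"
| "peval v (Hw C f) = v (Hw C f)"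

definition tautology :: "('p, 'a) fm \<Rightarrow> bool" where
  "tautology f = (\<forall>v. peval v f)"

inductive derivable :: "('p, 'a) fm \<Rightarrow> bool" where
  Taut: "tautology f \<Longrightarrow> derivable f"
| Truth: "derivable (Imp (Kn C f) f)"
| NegIntro: "derivable (Imp (Neg (Kn C f)) (Kn C (Neg (Kn C f))))"
| Distr: "derivable (Imp (Kn C (Imp f g)) (Imp (Kn C f) (Kn C g)))"
| Mono: "C \<subseteq> D \<Longrightarrow> derivable (Imp (Kn C f) (Kn D f))"
| StratPosIntro: "derivable (Imp (Hw C f) (Kn C (Hw C f)))"
| Coop: "C \<inter> D = {} \<Longrightarrow> derivable (Imp (Hw C (Imp f g)) (Imp (Hw D f) (Hw (C \<union> D) g)))"
| EmptyCoal: "derivable (Imp (Kn {} f) (Hw {} f))"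
| PerfRecall: "D \<subseteq> C \<Longrightarrow> C \<noteq> {} \<Longrightarrow> derivable (Imp (Hw D f) (Hw D (Kn C f)))"
| UnachFalse: "derivable (Neg (Hw C FBot))"
| NecK: "derivable f \<Longrightarrow> derivable (Kn C f)"
| NecH: "derivable f \<Longrightarrow> derivable (Hw C f)"
| MP: "derivable (Imp f g) \<Longrightarrow> derivable f \<Longrightarrow> derivable g"

definition consistent :: "('p, 'a) fm set \<Rightarrow> bool" where
  "consistent X = (\<not> (\<exists>fs. set fs \<subseteq> X \<and> derivable (foldr Imp fs FBot)))"

definition maxcons :: "('p, 'a) fm set \<Rightarrow> bool" where
  "maxcons X = (consistent X \<and> (\<forall>f. f \<notin> X \<longrightarrow> \<not> consistent (insert f X)))"

text \<open>A state X0,C1,X1,...,Cn,Xn is represented by the list [(C1,X1),...,(Cn,Xn)]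
  (X0 is fixed). seqset X0 ws i is the set X_i.\<close>
definition seqset :: "('p, 'a) fm set \<Rightarrow> ('a set \<times> ('p, 'a) fm set) list \<Rightarrow> nat \<Rightarrow> ('p, 'a) fm set" where
  "seqset X0 ws i = (if i = 0 then X0 else snd (ws ! (i - 1)))"

definition canon_W :: "('p, 'a) fm set \<Rightarrow> ('a set \<times> ('p, 'a) fm set) list set" where
  "canon_W X0 = {ws. \<forall>i<length ws. maxcons (snd (ws ! i)) \<and>
       {f. Kn (fst (ws ! i)) f \<in> seqset X0 ws i} \<subseteq> snd (ws ! i)}"

definition hdset :: "('p, 'a) fm set \<Rightarrow> ('a set \<times> ('p, 'a) fm set) list \<Rightarrow> ('p, 'a) fm set" where
  "hdset X0 ws = seqset X0 ws (length ws)"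

definition canon_M :: "('p, 'a) fm set \<Rightarrow> ('a set \<times> ('p, 'a) fm set) list \<Rightarrow> ('a \<Rightarrow> ('p, 'a) fm)
    \<Rightarrow> ('a set \<times> ('p, 'a) fm set) list \<Rightarrow> bool" where
  "canon_M X0 w s w' = (\<forall>D f. Hw D f \<in> hdset X0 w \<and> (\<forall>a\<in>D. s a = f) \<longrightarrow> f \<in> hdset X0 w')"

definition regular :: "'w set \<Rightarrow> ('w \<Rightarrow> 's \<Rightarrow> 'w \<Rightarrow> bool) \<Rightarrow> bool" where
  "regular W M = (\<forall>w\<in>W. \<forall>s. \<exists>w'\<in>W. M w s w')"

end

theory Submission
  imports Defs
begin

text \<open>Under a profile s, a state w with last set H has the successor w, {}, Y, where Y is a
  maximal consistent extension of the formulas f with Kn {} f \<in> H (so that w, {}, Y is a state)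
  and of those f with Hw D f \<in> H for a coalition D all of whose members choose f (so that the
  transition is in M). These formulas are consistent: each is achieved by the coalition of the
  agents choosing it (by Empty Coalition for the Kn {}-formulas); coalitions choosing distinct
  formulas are disjoint, so Cooperation merges them into one coalition achieving whatever the
  formulas entail, and Unachievability of Falsehood rules out falsum.\<close>

definition successor_core :: "('p, 'a) fm set \<Rightarrow> ('a \<Rightarrow> ('p, 'a) fm) \<Rightarrow> ('p, 'a) fm set" where
  "successor_core H s = {f. Kn {} f \<in> H} \<union> {f. \<exists>D. Hw D f \<in> H \<and> (\<forall>a\<in>D. s a = f)}"

lemma peval_foldr_Imp: "peval v (foldr Imp fs g) = ((\<forall>f\<in>set fs. peval v f) \<longrightarrow> peval v g)"
  by (induction fs) auto

lemma derivable_tautological_consequence: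
  assumes "\<forall>p\<in>set ps. derivable p" "tautology (foldr Imp ps c)"
  shows "derivable c"
  using assms
proof (induction ps arbitrary: c rule: rev_induct)
  case Nil
  then show ?case by (simp add: derivable.Taut)
next
  case (snoc p ps)
  have "tautology (foldr Imp ps (Imp p c))"
    using snoc.prems(2) by (simp add: tautology_def peval_foldr_Imp)
  then have "derivable (Imp p c)"
    using snoc.IH snoc.prems(1) by simp
  then show ?case
    using snoc.prems(1) derivable.MP by auto
qed

lemma derivable_foldr_Imp_cong:
  assumes "derivable (foldr Imp fs g)" "set fs = set gs"
  shows "derivable (foldr Imp gs g)"
  by (rule derivable_tautological_consequence[of "[foldr Imp fs g]"])
    (use assms in \<open>auto simp: tautology_def peval_foldr_Imp\<close>)

lemma derivable_foldr_Imp_Cons: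
  assumes "derivable (foldr Imp (f # fs) g)"
  shows "derivable (foldr Imp fs (Imp f g))"
  by (rule derivable_tautological_consequence[of "[foldr Imp (f # fs) g]"])
    (use assms in \<open>auto simp: tautology_def peval_foldr_Imp\<close>)

lemma derivable_Cooperation_under_premises:
  assumes "derivable (foldr Imp gs (Hw E (Imp f g)))" "derivable (Imp h (Hw D f))" "E \<inter> D = {}"
  shows "derivable (foldr Imp (h # gs) (Hw (E \<union> D) g))"
proof -
  have "derivable (Imp (Hw E (Imp f g)) (Imp (Hw D f) (Hw (E \<union> D) g)))"
    using assms(3) by (rule derivable.Coop)
  with assms(1,2) show ?thesis
    by (intro derivable_tautological_consequence
        [of "[foldr Imp gs (Hw E (Imp f g)), Imp h (Hw D f), Imp (Hw E (Imp f g)) (Imp (Hw D f) (Hw (E \<union> D) g))]"])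
      (auto simp: tautology_def peval_foldr_Imp)
qed

lemma successor_core_achieved:
  assumes "f \<in> successor_core H s"
  obtains D h where "h \<in> H" "derivable (Imp h (Hw D f))" "\<forall>a\<in>D. s a = f"
proof -
  consider "Kn {} f \<in> H" | D where "Hw D f \<in> H" "\<forall>a\<in>D. s a = f"
    using assms unfolding successor_core_def by blast
  then show thesis
  proof cases
    case 1
    then show thesis using that[of "Kn {} f" "{}"] derivable.EmptyCoal by blast
  next
    case 2
    have "derivable (Imp (Hw D f) (Hw D f))"
      by (rule derivable.Taut) (simp add: tautology_def)
    then show thesis using that 2 by blast
  qed
qed

lemma derivable_Hw_from_successor_core:
  assumes "distinct fs" "set fs \<subseteq> successor_core H s" "derivable (foldr Imp fs g)"
  shows "\<exists>E gs. set gs \<subseteq> H \<and> derivable (foldr Imp gs (Hw E g)) \<and> E \<subseteq> s -` set fs"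
  using assms
proof (induction fs arbitrary: g)
  case Nil
  then have "derivable (Hw {} g)"
    by (simp add: derivable.NecH)
  then show ?case
    by (intro exI[of _ "{}"] exI[of _ "[]"]) simp
next
  case (Cons f fs)
  have "distinct fs" "set fs \<subseteq> successor_core H s" "derivable (foldr Imp fs (Imp f g))"
    using Cons.prems derivable_foldr_Imp_Cons by auto
  then obtain E gs where IH: "set gs \<subseteq> H" "derivable (foldr Imp gs (Hw E (Imp f g)))" "E \<subseteq> s -` set fs"
    using Cons.IH by blast
  have "f \<in> successor_core H s"
    using Cons.prems(2) by simp
  then obtain D h where f: "h \<in> H" "derivable (Imp h (Hw D f))" "\<forall>a\<in>D. s a = f"
    by (rule successor_core_achieved)
  have "E \<inter> D = {}"
    using IH(3) f(3) Cons.prems(1) by auto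
  then have "derivable (foldr Imp (h # gs) (Hw (E \<union> D) g))"
    using IH(2) f(2) by (rule derivable_Cooperation_under_premises[rotated 2])
  moreover have "E \<union> D \<subseteq> s -` set (f # fs)"
    using IH(3) f(3) by auto
  ultimately show ?case
    using IH(1) f(1) by (intro exI[of _ "E \<union> D"] exI[of _ "h # gs"]) auto
qed

lemma consistent_successor_core:
  assumes "consistent H"
  shows "consistent (successor_core H s)"
  unfolding consistent_def
proof
  assume "\<exists>fs. set fs \<subseteq> successor_core H s \<and> derivable (foldr Imp fs FBot)"
  then obtain fs where "set (remdups fs) \<subseteq> successor_core H s" "derivable (foldr Imp (remdups fs) FBot)"
    using derivable_foldr_Imp_cong by (metis set_remdups)
  then obtain E gs where gs: "set gs \<subseteq> H" "derivable (foldr Imp gs (Hw E FBot))"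
    using derivable_Hw_from_successor_core[OF distinct_remdups] by blast
  have "derivable (Neg (Hw E FBot))"
    by (rule derivable.UnachFalse)
  with gs(2) have "derivable (foldr Imp gs FBot)"
    by (intro derivable_tautological_consequence[of "[foldr Imp gs (Hw E FBot), Neg (Hw E FBot)]"])
      (auto simp: tautology_def peval_foldr_Imp)
  with gs(1) assms show False
    unfolding consistent_def by blast
qed

lemma lindenbaum:
  assumes "consistent S"
  obtains Y where "S \<subseteq> Y" "maxcons Y"
proof -
  let ?A = "{Y. S \<subseteq> Y \<and> consistent Y}"
  have "\<exists>M\<in>?A. \<forall>X\<in>?A. M \<subseteq> X \<longrightarrow> X = M"
  proof (rule subset_Zorn_nonempty)
    show "?A \<noteq> {}"
      using assms by blast
  next
    fix \<C> assume \<C>: "\<C> \<noteq> {}" "subset.chain ?A \<C>"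
    have "consistent (\<Union>\<C>)"
      unfolding consistent_def
    proof
      assume "\<exists>fs. set fs \<subseteq> \<Union>\<C> \<and> derivable (foldr Imp fs FBot)"
      then obtain fs where fs: "set fs \<subseteq> \<Union>\<C>" "derivable (foldr Imp fs FBot)"
        by blast
      obtain X where X: "X \<in> \<C>" "set fs \<subseteq> X"
        using finite_subset_Union_chain[OF finite_set fs(1) \<C>] .
      with \<C>(2) have "consistent X"
        unfolding subset.chain_def by blast
      with X(2) fs(2) show False
        unfolding consistent_def by blast
    qed
    moreover obtain X where "X \<in> \<C>"
      using \<C>(1) by blast
    with \<C>(2) have "S \<subseteq> \<Union>\<C>"
      unfolding subset.chain_def by blast
    ultimately show "\<Union>\<C> \<in> ?A"
      by blast
  qed
  then obtain M where M: "S \<subseteq> M" "consistent M" and M_max: "\<forall>X\<in>?A. M \<subseteq> X \<longrightarrow> X = M"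
    by auto
  have "maxcons M"
    unfolding maxcons_def
  proof (intro conjI allI impI notI)
    fix f assume f: "f \<notin> M" "consistent (insert f M)"
    have "insert f M \<in> ?A"
      using M(1) f(2) by blast
    with M_max have "insert f M = M"
      by blast
    with f(1) show False
      by blast
  qed (fact M(2))
  with M(1) show thesis
    by (rule that)
qed

lemma hdset_snoc: "hdset X0 (w @ [x]) = snd x"
  by (simp add: hdset_def seqset_def)

lemma maxcons_hdset:
  assumes "maxcons X0" "w \<in> canon_W X0"
  shows "maxcons (hdset X0 w)"
proof (cases w rule: rev_cases)
  case Nil
  then show ?thesis using assms(1) by (simp add: hdset_def seqset_def)
next
  case (snoc v x)
  then show ?thesis
    using assms(2) by (auto simp: hdset_snoc canon_W_def dest: spec[of _ "length v"])
qed

lemma snoc_in_canon_W: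
  assumes "w \<in> canon_W X0" "maxcons Y" "{f. Kn C f \<in> hdset X0 w} \<subseteq> Y"
  shows "w @ [(C, Y)] \<in> canon_W X0"
proof -
  have "seqset X0 (w @ [(C, Y)]) i = seqset X0 w i" if "i \<le> length w" for i
    using that by (cases i) (auto simp: seqset_def nth_append)
  with assms show ?thesis
    unfolding canon_W_def hdset_def by (auto simp: nth_append less_Suc_eq)
qed

theorem lemma25:
  fixes X0 :: "('p, 'a) fm set"
  assumes "maxcons X0"
  shows "regular (canon_W X0) (canon_M X0)"
  unfolding regular_def
proof (intro ballI allI)
  fix w s assume w: "w \<in> canon_W X0"
  have "consistent (successor_core (hdset X0 w) s)"
    using maxcons_hdset[OF assms w] by (simp add: maxcons_def consistent_successor_core)
  then obtain Y where Y: "successor_core (hdset X0 w) s \<subseteq> Y" "maxcons Y"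
    by (rule lindenbaum)
  have "w @ [({}, Y)] \<in> canon_W X0"
    using Y by (intro snoc_in_canon_W[OF w]) (auto simp: successor_core_def)
  moreover have "canon_M X0 w s (w @ [({}, Y)])"
    using Y(1) unfolding canon_M_def hdset_snoc successor_core_def by auto
  ultimately show "\<exists>w'\<in>canon_W X0. canon_M X0 w s w'"
    by blast
qed

end
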